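(* Let $\epsilon\in[0,1]$ and let $\boldsymbol{g}_t,\boldsymbol{\mu}_t,\Delta_t\in\mathbb{R}^d$ satisfy $\boldsymbol{g}_t^\top\Delta_t>0$, $\boldsymbol{\mu}_t\perp\boldsymbol{g}_t$ and $\boldsymbol{\mu}_t\perp\Delta_t$. Then (whenever the denominators are nonzero) $$\frac{(1-\epsilon)\|\boldsymbol{g}_t\|^2+\boldsymbol{g}_t^\top\Delta_t}{\|(1-\epsilon)\boldsymbol{g}_t+\epsilon\boldsymbol{\mu}_t+\Delta_t\|}+\frac{(1-\epsilon)\|\boldsymbol{g}_t\|^2-\boldsymbol{g}_t^\top\Delta_t}{\|(1-\epsilon)\boldsymbol{g}_t+\epsilon\boldsymbol{\mu}_t-\Delta_t\|}\ge0.$$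
   Context: The condition $\boldsymbol{g}_t^\top\Delta_t>0$ means $\Delta_t$ lies in the open half-space $H_+=\{v:\boldsymbol{g}_t^\top v>0\}$. *)

theory Defs
  imports "HOL-Analysis.Analysis"
begin

end

theory Submission
  imports Defs
begin

text \<open>With \<open>u = (1 - \<epsilon>) g + \<epsilon> \<mu>\<close> the numerators are \<open>g \<bullet> (u \<plusminus> \<Delta>)\<close>, so the claim says that
  \<open>g\<close> makes a non-obtuse angle with the sum of the unit vectors along \<open>u + \<Delta>\<close> and \<open>u - \<Delta>\<close>.
  Clearing denominators, this amounts to
  \<open>(\<parallel>u + \<Delta>\<parallel> + \<parallel>u - \<Delta>\<parallel>)\<^sup>2 (g \<bullet> u) \<ge> 4 (u \<bullet> \<Delta>) (g \<bullet> \<Delta>)\<close>; the triangle inequality gives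
  \<open>\<parallel>u + \<Delta>\<parallel> + \<parallel>u - \<Delta>\<parallel> \<ge> 2 \<parallel>\<Delta>\<parallel>\<close>, and the remaining inequality
  \<open>(1 - \<epsilon>) (g \<bullet> \<Delta>)\<^sup>2 \<le> (1 - \<epsilon>) \<parallel>g\<parallel>\<^sup>2 \<parallel>\<Delta>\<parallel>\<^sup>2\<close> is Cauchy-Schwarz.\<close>

lemma norm_add_sq_minus_norm_diff_sq:
  fixes u d :: "'a::real_inner"
  shows "(norm (u + d))\<^sup>2 - (norm (u - d))\<^sup>2 = 4 * (u \<bullet> d)"
  by (simp add: power2_norm_eq_inner inner_add_left inner_add_right inner_diff_left
      inner_diff_right inner_commute[of d u])

lemma inner_sgn_right:
  fixes g v :: "'a::real_inner"
  shows "g \<bullet> sgn v = (g \<bullet> v) / norm v"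
  by (simp add: sgn_div_norm divide_inverse mult.commute)

lemma inner_sgn_add_sgn_diff_nonneg:
  fixes g u d :: "'a::real_inner"
  assumes "u + d \<noteq> 0" and "u - d \<noteq> 0"
    and gu: "g \<bullet> u \<ge> 0"
    and bound: "(u \<bullet> d) * (g \<bullet> d) \<le> (g \<bullet> u) * (norm d)\<^sup>2"
  shows "g \<bullet> (sgn (u + d) + sgn (u - d)) \<ge> 0"
proof -
  define x y where "x = norm (u + d)" and "y = norm (u - d)"
  have "x > 0" "y > 0"
    using assms(1,2) by (simp_all add: x_def y_def)
  have sq_diff: "x\<^sup>2 - y\<^sup>2 = 4 * (u \<bullet> d)"
    unfolding x_def y_def by (rule norm_add_sq_minus_norm_diff_sq)
  have "norm ((u + d) - (u - d)) \<le> x + y"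
    unfolding x_def y_def by (rule norm_triangle_ineq4)
  then have "2 * norm d \<le> x + y"
    by (simp flip: scaleR_2)
  then have "(2 * norm d)\<^sup>2 * (g \<bullet> u) \<le> (x + y)\<^sup>2 * (g \<bullet> u)"
    by (intro mult_right_mono power_mono gu) simp_all
  then have "0 \<le> (x + y)\<^sup>2 * (g \<bullet> u) - (x\<^sup>2 - y\<^sup>2) * (g \<bullet> d)"
    using bound by (simp add: sq_diff power_mult_distrib algebra_simps)
  also have "\<dots> = (x + y) * (x * y * ((g \<bullet> u + g \<bullet> d) / x + (g \<bullet> u - g \<bullet> d) / y))"
    using \<open>x > 0\<close> \<open>y > 0\<close> by (simp add: field_simps power2_eq_square)
  also have "\<dots> = (x + y) * (x * y * (g \<bullet> (sgn (u + d) + sgn (u - d))))"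
    by (simp add: x_def y_def inner_sgn_right inner_add_right inner_diff_right)
  finally show ?thesis
    using \<open>x > 0\<close> \<open>y > 0\<close> by (simp add: zero_le_mult_iff mult_le_0_iff)
qed

theorem lemma2:
  fixes g \<mu> \<Delta> :: "real ^ 'd" and \<epsilon> :: real
  assumes "0 \<le> \<epsilon>" and "\<epsilon> \<le> 1"
    and "g \<bullet> \<Delta> > 0"
    and "\<mu> \<bullet> g = 0" and "\<mu> \<bullet> \<Delta> = 0"
    and "norm ((1 - \<epsilon>) *\<^sub>R g + \<epsilon> *\<^sub>R \<mu> + \<Delta>) \<noteq> 0"
    and "norm ((1 - \<epsilon>) *\<^sub>R g + \<epsilon> *\<^sub>R \<mu> - \<Delta>) \<noteq> 0"
  shows "((1 - \<epsilon>) * (norm g)\<^sup>2 + g \<bullet> \<Delta>) / norm ((1 - \<epsilon>) *\<^sub>R g + \<epsilon> *\<^sub>R \<mu> + \<Delta>)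
       + ((1 - \<epsilon>) * (norm g)\<^sup>2 - g \<bullet> \<Delta>) / norm ((1 - \<epsilon>) *\<^sub>R g + \<epsilon> *\<^sub>R \<mu> - \<Delta>) \<ge> 0"
proof -
  define u where "u = (1 - \<epsilon>) *\<^sub>R g + \<epsilon> *\<^sub>R \<mu>"
  have gu: "g \<bullet> u = (1 - \<epsilon>) * (norm g)\<^sup>2"
    using \<open>\<mu> \<bullet> g = 0\<close> by (simp add: u_def inner_add_right power2_norm_eq_inner inner_commute)
  have ud: "u \<bullet> \<Delta> = (1 - \<epsilon>) * (g \<bullet> \<Delta>)"
    using \<open>\<mu> \<bullet> \<Delta> = 0\<close> by (simp add: u_def inner_add_left)
  have "(g \<bullet> \<Delta>)\<^sup>2 \<le> (norm g)\<^sup>2 * (norm \<Delta>)\<^sup>2"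
    using Cauchy_Schwarz_ineq[of g \<Delta>] by (simp add: power2_norm_eq_inner)
  then have "(1 - \<epsilon>) * (g \<bullet> \<Delta>)\<^sup>2 \<le> (1 - \<epsilon>) * ((norm g)\<^sup>2 * (norm \<Delta>)\<^sup>2)"
    using \<open>\<epsilon> \<le> 1\<close> by (simp add: mult_left_mono)
  then have "(u \<bullet> \<Delta>) * (g \<bullet> \<Delta>) \<le> (g \<bullet> u) * (norm \<Delta>)\<^sup>2"
    unfolding gu ud by (simp add: power2_eq_square mult_ac)
  then have "g \<bullet> (sgn (u + \<Delta>) + sgn (u - \<Delta>)) \<ge> 0"
    using assms(2,6,7) gu by (intro inner_sgn_add_sgn_diff_nonneg) (simp_all add: u_def)
  then show ?thesis
    by (simp add: u_def[symmetric] gu[symmetric] inner_sgn_right inner_add_right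
        inner_diff_right)
qed

end
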